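(* Let $G$ be a graph having a component with at least two cycles, and let $F$ be a subgraph of $G$. The following are equivalent: (a1) $F=[G]$, the core of $G$; (a2) $F$ is the unique maximum (with respect to the subgraph relation) element among the subgraphs of $G$ that are cacti-graphs; (a3) letting $G'$ be the graph obtained from $G$ by removing all tree components, $F$ is the only subgraph of $G$ that is a cacti-graph and satisfies $\Delta F=\Delta G'$.
   Context: Graphs are finite, may have loops and parallel edges, and have no isolated vertices unless stated otherwise. A leaf is a vertex incident to exactly one edge, which is not a loop. $\Delta G=|E(G)|-|V(G)|$. For $X\subseteq E(G)$, $G\langle X\rangle$ is the subgraph with edge set $X$ and vertex set the vertices incident to edges of $X$. A cycle is a connected graph all of whose vertices have degree 2 (a loop contributes 2). A cacti-graph is a graph with no isolated vertices, no leaves, and no component that is a cycle. For a connected graph $A$ containing a cycle, its kernel $\lfloor A\rfloor$ is the subgraph obtained from $A$ by repeatedly deleting leaves (with their incident edges) until no leaf remains; equivalently $\lfloor A\rfloor=A\langle X\rangle$ where $X$ is the inclusion-minimum nonempty subset of $E(A)$ with $\Delta A\langle X\rangle=\Delta A$. If $G$ has a component with at least two cycles, the core $[G]$ of $G$ is the union of the kernels $\lfloor A\rfloor$ over the components $A$ of $G$ with $\Delta A\ge1$ (i.e. with at least two cycles). *)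

theory Defs
  imports Main
begin

text \<open>A multigraph is given by an incidence map ends :: 'e => 'v set (each edge has
one endpoint (a loop) or two endpoints) and a finite edge set E.  Since graphs have no
isolated vertices, a graph is determined by its edge set: the graph G<X> has edge set X
and vertex set the vertices incident to X.  Subgraphs (without isolated vertices)
of G<E> are exactly the G<X> with X a subset of E, and the subgraph relation is inclusion.\<close>

definition multigraph :: "('e \<Rightarrow> 'v set) \<Rightarrow> 'e set \<Rightarrow> bool" where
  "multigraph ends E \<longleftrightarrow> finite E \<and> (\<forall>e\<in>E. card (ends e) = 1 \<or> card (ends e) = 2)"

definition verts :: "('e \<Rightarrow> 'v set) \<Rightarrow> 'e set \<Rightarrow> 'v set" where
  "verts ends X = (\<Union>e\<in>X. ends e)"

definition Delta :: "('e \<Rightarrow> 'v set) \<Rightarrow> 'e set \<Rightarrow> int" where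
  "Delta ends X = int (card X) - int (card (verts ends X))"

definition is_loop :: "('e \<Rightarrow> 'v set) \<Rightarrow> 'e \<Rightarrow> bool" where
  "is_loop ends e \<longleftrightarrow> card (ends e) = 1"

definition degree :: "('e \<Rightarrow> 'v set) \<Rightarrow> 'e set \<Rightarrow> 'v \<Rightarrow> nat" where
  "degree ends X v = card {e\<in>X. v \<in> ends e \<and> \<not> is_loop ends e}
                     + 2 * card {e\<in>X. v \<in> ends e \<and> is_loop ends e}"

definition is_leaf :: "('e \<Rightarrow> 'v set) \<Rightarrow> 'e set \<Rightarrow> 'v \<Rightarrow> bool" where
  "is_leaf ends X v \<longleftrightarrow> (\<exists>e\<in>X. {f\<in>X. v \<in> ends f} = {e} \<and> \<not> is_loop ends e)"

text \<open>two edges of X are adjacent if they share a vertex; connectivity of edges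
(for graphs without isolated vertices this is connectivity of the graph)\<close>
definition adj :: "('e \<Rightarrow> 'v set) \<Rightarrow> 'e set \<Rightarrow> ('e \<times> 'e) set" where
  "adj ends X = {(e, f). e \<in> X \<and> f \<in> X \<and> ends e \<inter> ends f \<noteq> {}}"

definition connected_graph :: "('e \<Rightarrow> 'v set) \<Rightarrow> 'e set \<Rightarrow> bool" where
  "connected_graph ends X \<longleftrightarrow> X \<noteq> {} \<and> (\<forall>e\<in>X. \<forall>f\<in>X. (e, f) \<in> (adj ends X)\<^sup>+)"

definition components :: "('e \<Rightarrow> 'v set) \<Rightarrow> 'e set \<Rightarrow> 'e set set" where
  "components ends X = {{f. (e, f) \<in> (adj ends X)\<^sup>+} | e. e \<in> X}"

definition is_cycle :: "('e \<Rightarrow> 'v set) \<Rightarrow> 'e set \<Rightarrow> bool" where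
  "is_cycle ends X \<longleftrightarrow> connected_graph ends X \<and> (\<forall>v\<in>verts ends X. degree ends X v = 2)"

definition has_cycle :: "('e \<Rightarrow> 'v set) \<Rightarrow> 'e set \<Rightarrow> bool" where
  "has_cycle ends X \<longleftrightarrow> (\<exists>Y\<subseteq>X. is_cycle ends Y)"

definition has_two_cycles :: "('e \<Rightarrow> 'v set) \<Rightarrow> 'e set \<Rightarrow> bool" where
  "has_two_cycles ends X \<longleftrightarrow> (\<exists>Y1 Y2. Y1 \<subseteq> X \<and> Y2 \<subseteq> X \<and> Y1 \<noteq> Y2 \<and>
      is_cycle ends Y1 \<and> is_cycle ends Y2)"

text \<open>cacti-graph: no isolated vertices (automatic), no leaves, no component a cycle\<close>
definition cacti :: "('e \<Rightarrow> 'v set) \<Rightarrow> 'e set \<Rightarrow> bool" where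
  "cacti ends X \<longleftrightarrow> (\<forall>v\<in>verts ends X. \<not> is_leaf ends X v)
      \<and> (\<forall>A\<in>components ends X. \<not> is_cycle ends A)"

definition kernel :: "('e \<Rightarrow> 'v set) \<Rightarrow> 'e set \<Rightarrow> 'e set" where
  "kernel ends A = (THE X. X \<subseteq> A \<and> X \<noteq> {} \<and> Delta ends X = Delta ends A \<and>
      (\<forall>Y. Y \<subseteq> A \<and> Y \<noteq> {} \<and> Delta ends Y = Delta ends A \<longrightarrow> X \<subseteq> Y))"

definition core :: "('e \<Rightarrow> 'v set) \<Rightarrow> 'e set \<Rightarrow> 'e set" where
  "core ends E = (\<Union>A\<in>{A\<in>components ends E. has_two_cycles ends A}. kernel ends A)"

definition remove_trees :: "('e \<Rightarrow> 'v set) \<Rightarrow> 'e set \<Rightarrow> 'e set" where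
  "remove_trees ends E = \<Union>{A\<in>components ends E. has_cycle ends A}"

end

theory Submission
  imports Defs
begin

text \<open>Everything is governed by the excess \<open>\<Delta>\<close>. Inside a connected graph \<open>A\<close>, adding an
edge adjacent to a subgraph never lowers \<open>\<Delta>\<close>, so \<open>\<Delta>\<close> is monotone on nonempty edge subsets;
hence \<open>A\<close> contains a cycle iff \<open>\<Delta> A \<ge> 0\<close> and two cycles iff \<open>\<Delta> A \<ge> 1\<close>. By submodularity the
nonempty subsets of \<open>A\<close> with \<open>\<Delta> = \<Delta> A\<close> are closed under intersection, which yields the kernel,
and a subgraph of minimum degree 2 cannot be added to such a subset without raising \<open>\<Delta>\<close>, so it
lies inside the kernel. A cacti subgraph of \<open>G\<close> meets every component in a subgraph of minimum
degree 2; in a component with \<open>\<Delta> \<le> 0\<close> that would be a cycle component, so it lies in the core.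
Finally \<open>\<Delta>\<close> is additive over components, so \<open>\<Delta>\<close> of the core is \<open>\<Delta> G'\<close>, while every proper
cacti subgraph of the core loses excess in some component.\<close>

lemma sum_eq_const_if_ge:
  fixes f :: "'a \<Rightarrow> nat"
  assumes "finite V" "\<forall>v\<in>V. c \<le> f v" "sum f V = c * card V"
  shows "\<forall>v\<in>V. f v = c"
proof (rule ccontr)
  assume "\<not> ?thesis"
  then have "\<exists>a\<in>V. c < f a" using assms(2) by force
  then have "(\<Sum>v\<in>V. c) < sum f V" using assms(1,2) by (intro sum_strict_mono_ex1) auto
  then show False using assms(3) by simp
qed

lemma card_Diff_insert_less:
  assumes "finite Y" "e \<in> Y - X"
  shows "card (Y - insert e X) < card (Y - X)"
proof -
  have "Y - insert e X = (Y - X) - {e}" by blast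
  moreover have "card ((Y - X) - {e}) < card (Y - X)"
    using assms by (intro card_Diff1_less) auto
  ultimately show ?thesis by simp
qed

section \<open>Adjacency, components and degrees\<close>

locale incidence =
  fixes ends :: "'e \<Rightarrow> 'v set"
begin

definition incident :: "'e set \<Rightarrow> 'v \<Rightarrow> 'e set" where
  "incident X v = {e\<in>X. v \<in> ends e}"

definition adj_closed :: "'e set \<Rightarrow> 'e set \<Rightarrow> bool" where
  "adj_closed C Y \<longleftrightarrow> C \<subseteq> Y \<and> (\<forall>e\<in>C. \<forall>f\<in>Y. ends e \<inter> ends f \<noteq> {} \<longrightarrow> f \<in> C)"

definition component_of :: "'e set \<Rightarrow> 'e \<Rightarrow> 'e set" where
  "component_of X e = {f. (e, f) \<in> (adj ends X)\<^sup>+}"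

definition incidence_weight :: "'e \<Rightarrow> nat" where
  "incidence_weight e = (if is_loop ends e then 2 else 1)"

lemma verts_Un: "verts ends (X \<union> Y) = verts ends X \<union> verts ends Y"
  by (auto simp: verts_def)

lemma verts_insert: "verts ends (insert e X) = ends e \<union> verts ends X"
  by (auto simp: verts_def)

lemma verts_mono: "X \<subseteq> Y \<Longrightarrow> verts ends X \<subseteq> verts ends Y"
  by (auto simp: verts_def)

lemma in_vertsI: "e \<in> X \<Longrightarrow> v \<in> ends e \<Longrightarrow> v \<in> verts ends X"
  by (auto simp: verts_def)

lemma Delta_empty [simp]: "Delta ends {} = 0"
  by (simp add: Delta_def verts_def)

lemma adj_trancl_sym: "(a, b) \<in> (adj ends X)\<^sup>+ \<Longrightarrow> (b, a) \<in> (adj ends X)\<^sup>+"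
proof -
  have "sym (adj ends X)" by (auto simp: adj_def sym_def)
  then show "(a, b) \<in> (adj ends X)\<^sup>+ \<Longrightarrow> (b, a) \<in> (adj ends X)\<^sup>+"
    by (rule symD[OF sym_trancl])
qed

lemma adj_trancl_in: "(a, b) \<in> (adj ends X)\<^sup>+ \<Longrightarrow> b \<in> X"
  by (induction rule: trancl_induct) (auto simp: adj_def)

lemma adj_closed_trancl:
  assumes "adj_closed C Y" "(x, y) \<in> (adj ends Y)\<^sup>+" "x \<in> C"
  shows "y \<in> C \<and> (x, y) \<in> (adj ends C)\<^sup>+"
  using assms(2)
proof (induction rule: trancl_induct)
  case (base y)
  then have "y \<in> C" using assms(1,3) unfolding adj_closed_def adj_def by blast
  then have "(x, y) \<in> adj ends C" using base assms(3) unfolding adj_def by auto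
  then show ?case using \<open>y \<in> C\<close> by (simp add: r_into_trancl')
next
  case (step y z)
  then have yC: "y \<in> C" and xy: "(x, y) \<in> (adj ends C)\<^sup>+" by auto
  have "z \<in> C" using step(2) yC assms(1) unfolding adj_closed_def adj_def by blast
  moreover have "(y, z) \<in> adj ends C" using step(2) yC \<open>z \<in> C\<close> unfolding adj_def by auto
  ultimately show ?case using xy by (simp add: trancl_into_trancl)
qed

lemma adj_closed_connected_eq:
  assumes "connected_graph ends Y" "adj_closed C Y" "C \<noteq> {}"
  shows "C = Y"
proof -
  obtain x where x: "x \<in> C" using assms(3) by blast
  then have "x \<in> Y" using assms(2) adj_closed_def by blast
  then have "y \<in> C" if "y \<in> Y" for y
    using assms(1) that adj_closed_trancl[OF assms(2) _ x] unfolding connected_graph_def by blast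
  then show ?thesis using assms(2) adj_closed_def by blast
qed

lemma connected_adjacent_edge:
  assumes "connected_graph ends Y" "X \<subseteq> Y" "X \<noteq> {}" "X \<noteq> Y"
  obtains e where "e \<in> Y - X" "ends e \<inter> verts ends X \<noteq> {}"
proof -
  have "\<not> adj_closed X Y" using adj_closed_connected_eq assms by blast
  then show ?thesis using that assms(2) unfolding adj_closed_def by (blast intro: in_vertsI)
qed

lemma adj_closed_verts_disjoint:
  assumes "adj_closed C Y"
  shows "verts ends C \<inter> verts ends (Y - C) = {}"
  using assms unfolding adj_closed_def verts_def by blast

lemma adj_closed_incident: "adj_closed C Y \<Longrightarrow> v \<in> verts ends C \<Longrightarrow> incident C v = incident Y v"
  unfolding adj_closed_def incident_def verts_def by blast

lemma component_of_subset: "component_of X e \<subseteq> X"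
  unfolding component_of_def using adj_trancl_in by blast

lemma component_of_self: "e \<in> X \<Longrightarrow> ends e \<noteq> {} \<Longrightarrow> e \<in> component_of X e"
  unfolding component_of_def adj_def by auto

lemma adj_closed_component_of: "adj_closed (component_of X e) X"
  unfolding adj_closed_def
proof (intro conjI ballI impI)
  show "component_of X e \<subseteq> X" by (rule component_of_subset)
  fix f g assume f: "f \<in> component_of X e" and g: "g \<in> X" and "ends f \<inter> ends g \<noteq> {}"
  then have "(f, g) \<in> adj ends X" using component_of_subset by (auto simp: adj_def)
  then show "g \<in> component_of X e" using f unfolding component_of_def by (simp add: trancl_into_trancl)
qed

lemma component_of_eq:
  assumes "f \<in> component_of X e"
  shows "component_of X f = component_of X e"
proof -
  have "(e, f) \<in> (adj ends X)\<^sup>+" "(f, e) \<in> (adj ends X)\<^sup>+"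
    using assms adj_trancl_sym by (auto simp: component_of_def)
  then show ?thesis unfolding component_of_def by (meson trancl_trans)
qed

lemma connected_component_of:
  assumes "e \<in> X" "ends e \<noteq> {}"
  shows "connected_graph ends (component_of X e)"
  unfolding connected_graph_def
proof (intro conjI ballI)
  show "component_of X e \<noteq> {}" using component_of_self[OF assms] by blast
  fix f g assume f: "f \<in> component_of X e" and g: "g \<in> component_of X e"
  then have "(f, e) \<in> (adj ends X)\<^sup>+" "(e, g) \<in> (adj ends X)\<^sup>+"
    using adj_trancl_sym by (auto simp: component_of_def)
  then have "(f, g) \<in> (adj ends X)\<^sup>+" by (rule trancl_trans)
  then show "(f, g) \<in> (adj ends (component_of X e))\<^sup>+"
    using adj_closed_trancl[OF adj_closed_component_of _ f] by blast
qed

lemma component_of_verts_disjoint: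
  assumes "component_of X e \<noteq> component_of X f"
  shows "verts ends (component_of X e) \<inter> verts ends (component_of X f) = {}"
proof (rule ccontr)
  assume "\<not> ?thesis"
  then obtain v a b where a: "a \<in> component_of X e" and b: "b \<in> component_of X f"
    and "v \<in> ends a" "v \<in> ends b"
    by (auto simp: verts_def)
  then have "b \<in> component_of X e"
    using adj_closed_component_of[of X e] component_of_subset unfolding adj_closed_def by blast
  then have "component_of X b = component_of X e" by (rule component_of_eq)
  then show False using assms component_of_eq[OF b] by simp
qed

lemma components_eq_image: "components ends X = component_of X ` X"
  by (auto simp: components_def component_of_def)

lemma degree_eq_sum_weight:
  assumes "finite X"
  shows "degree ends X v = (\<Sum>e\<in>incident X v. incidence_weight e)"
proof -
  have "finite (incident X v)" using assms by (simp add: incident_def)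
  then have "(\<Sum>e\<in>incident X v. incidence_weight e)
      = 2 * card (incident X v \<inter> {e. is_loop ends e}) + card (incident X v \<inter> - {e. is_loop ends e})"
    unfolding incidence_weight_def by (simp add: sum.If_cases)
  also have "incident X v \<inter> {e. is_loop ends e} = {e\<in>X. v \<in> ends e \<and> is_loop ends e}"
    by (auto simp: incident_def)
  also have "incident X v \<inter> - {e. is_loop ends e} = {e\<in>X. v \<in> ends e \<and> \<not> is_loop ends e}"
    by (auto simp: incident_def)
  finally show ?thesis unfolding degree_def by simp
qed

lemma incident_cong:
  assumes "incident X v = incident Y v"
  shows "{e\<in>X. v \<in> ends e \<and> P e} = {e\<in>Y. v \<in> ends e \<and> P e}"
  using assms unfolding incident_def by blast

lemma degree_cong:
  assumes "incident X v = incident Y v"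
  shows "degree ends X v = degree ends Y v"
  unfolding degree_def
  by (simp only: incident_cong[OF assms, where P = "is_loop ends"]
      incident_cong[OF assms, where P = "\<lambda>e. \<not> is_loop ends e"])

lemma is_leaf_cong:
  assumes "incident X v = incident Y v"
  shows "is_leaf ends X v = is_leaf ends Y v"
proof -
  have "{f\<in>X. v \<in> ends f} = {f\<in>Y. v \<in> ends f}" using assms by (simp add: incident_def)
  then show ?thesis unfolding is_leaf_def by auto
qed

lemma is_leafE:
  assumes "is_leaf ends X v"
  obtains e where "e \<in> X" "v \<in> ends e" "\<not> is_loop ends e"
    "\<And>f. f \<in> X \<Longrightarrow> v \<in> ends f \<Longrightarrow> f = e"
  using assms unfolding is_leaf_def by blast

lemma is_cycle_nonempty: "is_cycle ends X \<Longrightarrow> X \<noteq> {}"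
  by (simp add: is_cycle_def connected_graph_def)

lemma is_cycle_loop:
  assumes "ends e = {v}"
  shows "is_cycle ends {e}"
  unfolding is_cycle_def connected_graph_def
proof (intro conjI ballI)
  have "is_loop ends e" using assms by (simp add: is_loop_def)
  then have "{f \<in> {e}. v \<in> ends f \<and> \<not> is_loop ends f} = {}"
    and "{f \<in> {e}. v \<in> ends f \<and> is_loop ends f} = {e}"
    using assms by auto
  then show "degree ends {e} u = 2" if "u \<in> verts ends {e}" for u
    using that assms unfolding degree_def verts_def by simp
  show "(f, g) \<in> (adj ends {e})\<^sup>+" if "f \<in> {e}" "g \<in> {e}" for f g
    using that assms by (auto simp: adj_def)
qed simp

lemma kernel_eqI:
  assumes "K \<subseteq> A" "K \<noteq> {}" "Delta ends K = Delta ends A"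
    and "\<And>Y. Y \<subseteq> A \<Longrightarrow> Y \<noteq> {} \<Longrightarrow> Delta ends Y = Delta ends A \<Longrightarrow> K \<subseteq> Y"
  shows "kernel ends A = K"
  unfolding kernel_def
proof (rule the_equality)
  show "K \<subseteq> A \<and> K \<noteq> {} \<and> Delta ends K = Delta ends A \<and>
      (\<forall>Y. Y \<subseteq> A \<and> Y \<noteq> {} \<and> Delta ends Y = Delta ends A \<longrightarrow> K \<subseteq> Y)"
    using assms by blast
  fix X assume "X \<subseteq> A \<and> X \<noteq> {} \<and> Delta ends X = Delta ends A \<and>
      (\<forall>Y. Y \<subseteq> A \<and> Y \<noteq> {} \<and> Delta ends Y = Delta ends A \<longrightarrow> X \<subseteq> Y)"
  then show "X = K" using assms by (meson subset_antisym)
qed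

end

section \<open>Excess of subgraphs\<close>

locale finite_multigraph = incidence ends for ends :: "'e \<Rightarrow> 'v set" +
  fixes E :: "'e set"
  assumes multigraph: "multigraph ends E"
begin

lemma finite_edges: "finite E"
  using multigraph by (simp add: multigraph_def)

lemma card_ends: "e \<in> E \<Longrightarrow> card (ends e) = 1 \<or> card (ends e) = 2"
  using multigraph by (simp add: multigraph_def)

lemma finite_ends: "e \<in> E \<Longrightarrow> finite (ends e)"
  using card_ends by (metis card.infinite zero_neq_numeral zero_neq_one)

lemma ends_nonempty: "e \<in> E \<Longrightarrow> ends e \<noteq> {}"
  using card_ends by fastforce

lemma card_ends_le_2: "e \<in> E \<Longrightarrow> card (ends e) \<le> 2"
  using card_ends by fastforce

lemma finite_edge_subset: "X \<subseteq> E \<Longrightarrow> finite X"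
  using finite_edges finite_subset by blast

lemma finite_verts: "X \<subseteq> E \<Longrightarrow> finite (verts ends X)"
  unfolding verts_def using finite_edge_subset finite_ends by blast

lemma edges_disjoint_if_verts_disjoint:
  assumes "X \<subseteq> E" "verts ends X \<inter> verts ends Y = {}"
  shows "X \<inter> Y = {}"
proof (rule ccontr)
  assume "X \<inter> Y \<noteq> {}"
  then obtain e where e: "e \<in> X" "e \<in> Y" by blast
  then obtain v where "v \<in> ends e" using ends_nonempty assms(1) by blast
  then show False using e assms(2) in_vertsI by blast
qed

lemma Delta_UN_verts_disjoint:
  assumes "finite I" "\<forall>i\<in>I. X i \<subseteq> E"
    and "\<forall>i\<in>I. \<forall>j\<in>I. i \<noteq> j \<longrightarrow> verts ends (X i) \<inter> verts ends (X j) = {}"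
  shows "Delta ends (\<Union>i\<in>I. X i) = (\<Sum>i\<in>I. Delta ends (X i))"
proof -
  have "card (\<Union>i\<in>I. X i) = (\<Sum>i\<in>I. card (X i))"
    using assms edges_disjoint_if_verts_disjoint finite_edge_subset by (intro card_UN_disjoint) auto
  moreover have "verts ends (\<Union>i\<in>I. X i) = (\<Union>i\<in>I. verts ends (X i))"
    by (auto simp: verts_def)
  moreover have "card (\<Union>i\<in>I. verts ends (X i)) = (\<Sum>i\<in>I. card (verts ends (X i)))"
    using assms finite_verts by (intro card_UN_disjoint) auto
  ultimately show ?thesis unfolding Delta_def by (simp add: sum_subtractf)
qed

lemma Delta_Un_verts_disjoint:
  assumes "X \<subseteq> E" "Y \<subseteq> E" "verts ends X \<inter> verts ends Y = {}"
  shows "Delta ends (X \<union> Y) = Delta ends X + Delta ends Y"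
proof -
  have "card (X \<union> Y) = card X + card Y"
    using edges_disjoint_if_verts_disjoint assms finite_edge_subset by (simp add: card_Un_disjoint)
  moreover have "card (verts ends (X \<union> Y)) = card (verts ends X) + card (verts ends Y)"
    unfolding verts_Un using assms finite_verts by (simp add: card_Un_disjoint)
  ultimately show ?thesis by (simp add: Delta_def)
qed

lemma Delta_insert:
  assumes "X \<subseteq> E" "e \<in> E" "e \<notin> X"
  shows "Delta ends (insert e X) = Delta ends X + 1 - int (card (ends e - verts ends X))"
proof -
  have split: "verts ends (insert e X) = verts ends X \<union> (ends e - verts ends X)"
    by (auto simp: verts_insert)
  have "finite (verts ends X)" "finite (ends e - verts ends X)"
    using finite_verts finite_ends assms by auto
  then have "card (verts ends (insert e X)) = card (verts ends X) + card (ends e - verts ends X)"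
    unfolding split by (rule card_Un_disjoint) blast
  moreover have "card (insert e X) = card X + 1"
    using finite_edge_subset[OF assms(1)] assms(3) by simp
  ultimately show ?thesis by (simp add: Delta_def)
qed

lemma Delta_single: "e \<in> E \<Longrightarrow> Delta ends {e} = 1 - int (card (ends e))"
  by (simp add: Delta_def verts_def)

lemma card_ends_Diff_le_1:
  assumes "e \<in> E" "ends e \<inter> S \<noteq> {}"
  shows "card (ends e - S) \<le> 1"
proof -
  obtain a where a: "a \<in> ends e" "a \<in> S" using assms by blast
  have "card (ends e - S) \<le> card (ends e - {a})"
    using a finite_ends[OF assms(1)] by (intro card_mono) auto
  also have "\<dots> = card (ends e) - 1" using a(1) by simp
  finally show ?thesis using card_ends_le_2[OF assms(1)] by linarith
qed

lemma Delta_insert_adjacent: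
  assumes "X \<subseteq> E" "e \<in> E" "e \<notin> X" "ends e \<inter> verts ends X \<noteq> {}"
  shows "Delta ends X \<le> Delta ends (insert e X)"
proof -
  have "int (card (ends e - verts ends X)) \<le> 1"
    using card_ends_Diff_le_1[OF assms(2,4)] by simp
  then show ?thesis unfolding Delta_insert[OF assms(1-3)] by simp
qed

lemma Delta_submodular:
  assumes "Y \<subseteq> E" "Z \<subseteq> E"
  shows "Delta ends Y + Delta ends Z \<le> Delta ends (Y \<union> Z) + Delta ends (Y \<inter> Z)"
proof -
  have fY: "finite Y" "finite Z" using finite_edge_subset assms by auto
  have fV: "finite (verts ends Y)" "finite (verts ends Z)" using finite_verts assms by auto
  have edges: "card Y + card Z = card (Y \<union> Z) + card (Y \<inter> Z)"
    using card_Un_Int[OF fY] .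
  have "card (verts ends (Y \<inter> Z)) \<le> card (verts ends Y \<inter> verts ends Z)"
    using fV by (intro card_mono) (auto simp: verts_def)
  then have "card (verts ends (Y \<union> Z)) + card (verts ends (Y \<inter> Z))
      \<le> card (verts ends Y) + card (verts ends Z)"
    using card_Un_Int[OF fV] unfolding verts_Un by simp
  then show ?thesis using edges unfolding Delta_def by linarith
qed

text \<open>Grow \<open>X\<close> one adjacent edge at a time; such an edge brings at most one new vertex.\<close>

lemma Delta_le_connected:
  assumes "Y \<subseteq> E" "connected_graph ends Y" "X \<subseteq> Y" "X \<noteq> {}"
  shows "Delta ends X \<le> Delta ends Y"
  using assms(3,4)
proof (induction "card (Y - X)" arbitrary: X rule: less_induct)
  case less
  show ?case
  proof (cases "X = Y")
    case True then show ?thesis by simp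
  next
    case False
    then obtain e where e: "e \<in> Y - X" "ends e \<inter> verts ends X \<noteq> {}"
      using connected_adjacent_edge[OF assms(2) less(2,3)] by blast
    have lt: "card (Y - insert e X) < card (Y - X)"
      using card_Diff_insert_less[OF finite_edge_subset[OF assms(1)] e(1)] .
    have "insert e X \<subseteq> Y" "insert e X \<noteq> {}" using e less(2) by auto
    then have "Delta ends (insert e X) \<le> Delta ends Y"
      using less(1)[OF lt] by blast
    moreover have "Delta ends X \<le> Delta ends (insert e X)"
      using Delta_insert_adjacent[of X e] e less(2) assms(1) by blast
    ultimately show ?thesis by linarith
  qed
qed

lemma sum_degree:
  assumes "X \<subseteq> E"
  shows "(\<Sum>v\<in>verts ends X. degree ends X v) = 2 * card X"
proof -
  have fX: "finite X" using finite_edge_subset[OF assms] .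
  have fV: "finite (verts ends X)" using finite_verts[OF assms] .
  have "(\<Sum>v\<in>verts ends X. degree ends X v)
      = (\<Sum>v\<in>verts ends X. \<Sum>e\<in>{e. e \<in> X \<and> v \<in> ends e}. incidence_weight e)"
    using degree_eq_sum_weight[OF fX] by (simp add: incident_def)
  also have "\<dots> = (\<Sum>e\<in>X. \<Sum>v\<in>{v. v \<in> verts ends X \<and> v \<in> ends e}. incidence_weight e)"
    using sum.swap_restrict[OF fV fX, of "\<lambda>v e. incidence_weight e" "\<lambda>v e. v \<in> ends e"] by simp
  also have "\<dots> = (\<Sum>e\<in>X. incidence_weight e * card (ends e))"
  proof (rule sum.cong)
    fix e assume e: "e \<in> X"
    have "{v. v \<in> verts ends X \<and> v \<in> ends e} = ends e" using e by (auto simp: verts_def)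
    then show "(\<Sum>v\<in>{v. v \<in> verts ends X \<and> v \<in> ends e}. incidence_weight e)
        = incidence_weight e * card (ends e)" by simp
  qed simp
  also have "\<dots> = (\<Sum>e\<in>X. 2)"
    using card_ends assms by (intro sum.cong) (auto simp: incidence_weight_def is_loop_def)
  finally show ?thesis by simp
qed

lemma degree_ge_1:
  assumes "X \<subseteq> E" "v \<in> verts ends X"
  shows "1 \<le> degree ends X v"
proof -
  obtain e where e: "e \<in> incident X v" using assms(2) by (auto simp: verts_def incident_def)
  have "finite (incident X v)" using finite_edge_subset[OF assms(1)] by (simp add: incident_def)
  then have "incidence_weight e \<le> (\<Sum>e\<in>incident X v. incidence_weight e)"
    using e by (intro member_le_sum) auto
  moreover have "1 \<le> incidence_weight e" by (simp add: incidence_weight_def)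
  ultimately show ?thesis using degree_eq_sum_weight finite_edge_subset[OF assms(1)] by simp
qed

lemma degree_ge_2_if_not_leaf:
  assumes "X \<subseteq> E" "v \<in> verts ends X" "\<not> is_leaf ends X v"
  shows "2 \<le> degree ends X v"
proof -
  have fi: "finite (incident X v)" using finite_edge_subset[OF assms(1)] by (simp add: incident_def)
  obtain e where e: "e \<in> incident X v" using assms(2) by (auto simp: verts_def incident_def)
  have ds: "degree ends X v = (\<Sum>e\<in>incident X v. incidence_weight e)"
    using degree_eq_sum_weight finite_edge_subset[OF assms(1)] by simp
  show ?thesis
  proof (cases "is_loop ends e")
    case True
    then have "incidence_weight e = 2" by (simp add: incidence_weight_def)
    moreover have "incidence_weight e \<le> (\<Sum>e\<in>incident X v. incidence_weight e)"
      using e fi by (intro member_le_sum) auto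
    ultimately show ?thesis using ds by simp
  next
    case False
    have "incident X v \<noteq> {e}"
    proof
      assume "incident X v = {e}"
      then have "is_leaf ends X v" using False unfolding is_leaf_def incident_def by blast
      then show False using assms(3) by simp
    qed
    then obtain f where f: "f \<in> incident X v" "f \<noteq> e" using e by blast
    have "(\<Sum>e\<in>{e, f}. incidence_weight e) \<le> (\<Sum>e\<in>incident X v. incidence_weight e)"
      using e f fi by (intro sum_mono2) auto
    moreover have "(\<Sum>e\<in>{e, f}. incidence_weight e) = incidence_weight e + incidence_weight f"
      using f by simp
    moreover have "1 \<le> incidence_weight e" "1 \<le> incidence_weight f"
      by (simp_all add: incidence_weight_def)
    ultimately show ?thesis using ds by simp
  qed
qed

lemma ends_disjoint_third_part:
  assumes "e \<in> E" "ends e \<inter> P \<noteq> {}" "ends e - (P \<union> Q) \<noteq> {}" "P \<inter> Q = {}"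
  shows "ends e \<inter> Q = {}"
proof (rule ccontr)
  assume "ends e \<inter> Q \<noteq> {}"
  then obtain b where b: "b \<in> ends e" "b \<in> Q" by blast
  obtain a where a: "a \<in> ends e" "a \<in> P" using assms(2) by blast
  obtain c where c: "c \<in> ends e" "c \<notin> P \<union> Q" using assms(3) by blast
  have "a \<noteq> b" using a b assms(4) by blast
  moreover have "c \<noteq> a" "c \<noteq> b" using a b c by auto
  ultimately have "card {a, b, c} = 3" by simp
  moreover have "card {a, b, c} \<le> card (ends e)"
    using a b c finite_ends[OF assms(1)] by (intro card_mono) auto
  ultimately show False using card_ends_le_2[OF assms(1)] by simp
qed

lemma connected_verts_Int_nonempty:
  assumes "Y \<subseteq> E" "connected_graph ends Y" "Z1 \<union> Z2 = Y" "Z1 \<noteq> {}" "Z2 \<noteq> {}"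
  shows "verts ends Z1 \<inter> verts ends Z2 \<noteq> {}"
proof
  assume dj: "verts ends Z1 \<inter> verts ends Z2 = {}"
  have "adj_closed Z1 Y" unfolding adj_closed_def
  proof (intro conjI ballI impI)
    show "Z1 \<subseteq> Y" using assms(3) by blast
    fix x f assume x: "x \<in> Z1" and f: "f \<in> Y" and ne: "ends x \<inter> ends f \<noteq> {}"
    show "f \<in> Z1"
    proof (rule ccontr)
      assume "f \<notin> Z1"
      then have "f \<in> Z2" using f assms(3) by blast
      then show False using x ne dj by (auto simp: verts_def)
    qed
  qed
  then have "Z1 = Y" using adj_closed_connected_eq[OF assms(2)] assms(4) by blast
  then obtain z where z: "z \<in> Z2" "z \<in> Z1" using assms(3,5) by blast
  then obtain v where "v \<in> ends z" using ends_nonempty assms(1,3) by blast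
  then show False using z dj in_vertsI by blast
qed

text \<open>When the new edge has an end outside \<open>Z1 \<union> Z2\<close>, the excess is unchanged and the edge can
be attached to the one side it meets without merging the two sides.\<close>

lemma Delta_verts_disjoint_less_connected:
  assumes "Y \<subseteq> E" "connected_graph ends Y"
  shows "Z1 \<noteq> {} \<Longrightarrow> Z2 \<noteq> {} \<Longrightarrow> Z1 \<union> Z2 \<subseteq> Y \<Longrightarrow> verts ends Z1 \<inter> verts ends Z2 = {}
         \<Longrightarrow> Delta ends (Z1 \<union> Z2) < Delta ends Y"
proof (induction "card (Y - (Z1 \<union> Z2))" arbitrary: Z1 Z2 rule: less_induct)
  case less
  note ne1 = less(2) and ne2 = less(3) and sub = less(4) and dj = less(5)
  let ?Z = "Z1 \<union> Z2"
  have "?Z \<noteq> Y" using connected_verts_Int_nonempty[OF assms] ne1 ne2 dj by blast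
  then obtain e where e: "e \<in> Y - ?Z" "ends e \<inter> verts ends ?Z \<noteq> {}"
    using connected_adjacent_edge[OF assms(2) sub] ne1 by blast
  have eE: "e \<in> E" using e assms(1) by blast
  have ZE: "?Z \<subseteq> E" using sub assms(1) by blast
  have lt: "card (Y - insert e ?Z) < card (Y - ?Z)"
    using card_Diff_insert_less[OF finite_edge_subset[OF assms(1)] e(1)] .
  have DI: "Delta ends (insert e ?Z) = Delta ends ?Z + 1 - int (card (ends e - verts ends ?Z))"
    using Delta_insert[OF ZE eE] e(1) by blast
  show ?case
  proof (cases "ends e \<subseteq> verts ends ?Z")
    case True
    then have "ends e - verts ends ?Z = {}" by blast
    then have "card (ends e - verts ends ?Z) = 0" by (simp only: card.empty)
    then have "Delta ends (insert e ?Z) = Delta ends ?Z + 1" using DI by simp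
    moreover have "Delta ends (insert e ?Z) \<le> Delta ends Y"
      using Delta_le_connected[OF assms, of "insert e ?Z"] e(1) sub by blast
    ultimately show ?thesis by linarith
  next
    case False
    then have "ends e - verts ends ?Z \<noteq> {}" by blast
    then have "card (ends e - verts ends ?Z) \<noteq> 0" using finite_ends[OF eE] by simp
    then have "card (ends e - verts ends ?Z) = 1" using card_ends_Diff_le_1[OF eE e(2)] by linarith
    then have Deq: "Delta ends (insert e ?Z) = Delta ends ?Z" using DI by simp
    have out: "ends e - (verts ends Z1 \<union> verts ends Z2) \<noteq> {}" using False verts_Un by blast
    have VZ: "verts ends ?Z = verts ends Z1 \<union> verts ends Z2" by (rule verts_Un)
    show ?thesis
    proof (cases "ends e \<inter> verts ends Z1 \<noteq> {}")
      case True
      have "ends e \<inter> verts ends Z2 = {}" using ends_disjoint_third_part[OF eE True out dj] .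
      then have dj': "verts ends (insert e Z1) \<inter> verts ends Z2 = {}"
        using dj by (auto simp: verts_insert)
      have eqZ: "insert e Z1 \<union> Z2 = insert e ?Z" by blast
      have "Delta ends (insert e Z1 \<union> Z2) < Delta ends Y"
        using less(1)[of "insert e Z1" Z2] lt eqZ dj' ne2 sub e(1) by auto
      then show ?thesis using Deq eqZ by simp
    next
      case False
      then have T2: "ends e \<inter> verts ends Z2 \<noteq> {}" using e(2) VZ by blast
      have out': "ends e - (verts ends Z2 \<union> verts ends Z1) \<noteq> {}" using out by blast
      have "ends e \<inter> verts ends Z1 = {}" using ends_disjoint_third_part[OF eE T2 out'] dj by blast
      then have dj': "verts ends Z1 \<inter> verts ends (insert e Z2) = {}"
        using dj by (auto simp: verts_insert)
      have eqZ: "Z1 \<union> insert e Z2 = insert e ?Z" by blast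
      have "Delta ends (Z1 \<union> insert e Z2) < Delta ends Y"
        using less(1)[of Z1 "insert e Z2"] lt eqZ dj' ne1 sub e(1) by auto
      then show ?thesis using Deq eqZ by simp
    qed
  qed
qed

section \<open>Cycles\<close>

lemma Delta_cycle:
  assumes "X \<subseteq> E" "is_cycle ends X"
  shows "Delta ends X = 0"
proof -
  have "(\<Sum>v\<in>verts ends X. degree ends X v) = (\<Sum>v\<in>verts ends X. 2)"
    using assms(2) by (intro sum.cong) (auto simp: is_cycle_def)
  then have "2 * card X = 2 * card (verts ends X)" using sum_degree[OF assms(1)] by simp
  then show ?thesis by (simp add: Delta_def)
qed

context
  fixes X :: "'e set"
  assumes subset: "X \<subseteq> E" and Delta_nonneg: "0 \<le> Delta ends X"
    and minimal: "\<And>Y. Y \<subset> X \<Longrightarrow> Y \<noteq> {} \<Longrightarrow> Delta ends Y < 0"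
begin

lemma Delta_minimal_remove_edge:
  assumes "e \<in> X" "X - {e} \<noteq> {}"
  shows "ends e \<subseteq> verts ends (X - {e})" "Delta ends X = 0"
proof -
  have sub: "X - {e} \<subseteq> E" using subset by blast
  have "Delta ends X = Delta ends (X - {e}) + 1 - int (card (ends e - verts ends (X - {e})))"
    using Delta_insert[OF sub, of e] assms subset insert_Diff[OF assms(1)] by auto
  moreover have "Delta ends (X - {e}) < 0" using minimal assms by blast
  ultimately have c0: "card (ends e - verts ends (X - {e})) = 0" and "Delta ends X = 0"
    using Delta_nonneg by linarith+
  moreover have "finite (ends e - verts ends (X - {e}))" using finite_ends assms(1) subset by blast
  ultimately show "ends e \<subseteq> verts ends (X - {e})" "Delta ends X = 0" by auto
qed

text \<open>A component \<open>C\<close> of \<open>X\<close> different from \<open>X\<close> splits \<open>X\<close> into two vertex-disjoint parts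
whose excesses, both negative by minimality, add up to \<open>\<Delta> X \<ge> 0\<close>.\<close>

lemma component_of_Delta_minimal:
  assumes "e \<in> X"
  shows "component_of X e = X"
proof (rule ccontr)
  assume neq: "component_of X e \<noteq> X"
  let ?C = "component_of X e" and ?D = "X - component_of X e"
  have Cne: "?C \<noteq> {}" using component_of_self[OF assms] ends_nonempty assms subset by blast
  have CX: "?C \<subset> X" using neq component_of_subset[of X e] by blast
  have DX: "?D \<subset> X" and Dne: "?D \<noteq> {}" using Cne neq component_of_subset[of X e] by blast+
  have vd: "verts ends ?C \<inter> verts ends ?D = {}"
    using adj_closed_verts_disjoint[OF adj_closed_component_of] .
  have "Delta ends (?C \<union> ?D) = Delta ends ?C + Delta ends ?D"
    using Delta_Un_verts_disjoint[OF _ _ vd] subset component_of_subset[of X e] by blast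
  moreover have "?C \<union> ?D = X" using component_of_subset[of X e] by blast
  ultimately show False using minimal[OF CX Cne] minimal[OF DX Dne] Delta_nonneg by simp
qed

lemma is_cycle_if_Delta_minimal:
  assumes "X \<noteq> {}"
  shows "is_cycle ends X"
proof (cases "\<exists>e. X = {e}")
  case True
  then obtain e where Xe: "X = {e}" by blast
  have eE: "e \<in> E" using subset Xe by blast
  then have "int (card (ends e)) \<le> 1" using Delta_nonneg Delta_single[OF eE] Xe by simp
  then have "card (ends e) = 1" using card_ends[OF eE] by auto
  then obtain v where "ends e = {v}" using card_1_singletonE by blast
  then show ?thesis using is_cycle_loop Xe by blast
next
  case False
  then have big: "\<And>e. e \<in> X \<Longrightarrow> X - {e} \<noteq> {}" by blast
  obtain e0 where e0: "e0 \<in> X" using assms by blast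
  have "Delta ends X = 0" using Delta_minimal_remove_edge(2)[OF e0 big[OF e0]] .
  then have cV: "card X = card (verts ends X)" by (simp add: Delta_def)
  have "2 \<le> degree ends X v" if v: "v \<in> verts ends X" for v
  proof (rule degree_ge_2_if_not_leaf[OF subset v])
    show "\<not> is_leaf ends X v"
    proof
      assume "is_leaf ends X v"
      then obtain e where e: "e \<in> X" "v \<in> ends e" "\<And>f. f \<in> X \<Longrightarrow> v \<in> ends f \<Longrightarrow> f = e"
        by (rule is_leafE) blast
      have "v \<in> verts ends (X - {e})" using Delta_minimal_remove_edge[OF e(1) big[OF e(1)]] e(2) by blast
      then obtain f where "f \<in> X - {e}" "v \<in> ends f" by (auto simp: verts_def)
      then show False using e(3) by blast
    qed
  qed
  then have "\<forall>v\<in>verts ends X. degree ends X v = 2"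
    using sum_eq_const_if_ge[OF finite_verts[OF subset]] sum_degree[OF subset] cV by simp
  moreover have "connected_graph ends X"
    using connected_component_of[OF e0 ends_nonempty] component_of_Delta_minimal[OF e0] e0 subset
    by auto
  ultimately show ?thesis by (simp add: is_cycle_def)
qed

end

lemma has_cycle_if_Delta_nonneg:
  "X \<subseteq> E \<Longrightarrow> X \<noteq> {} \<Longrightarrow> 0 \<le> Delta ends X \<Longrightarrow> has_cycle ends X"
proof (induction "card X" arbitrary: X rule: less_induct)
  case less
  show ?case
  proof (cases "\<exists>Y. Y \<subset> X \<and> Y \<noteq> {} \<and> 0 \<le> Delta ends Y")
    case True
    then obtain Y where Y: "Y \<subset> X" "Y \<noteq> {}" "0 \<le> Delta ends Y" by blast
    have "card Y < card X" using Y(1) finite_edge_subset[OF less(2)] by (rule psubset_card_mono[rotated])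
    moreover have "Y \<subseteq> E" using Y(1) less(2) by blast
    ultimately have "has_cycle ends Y" using less(1)[of Y] Y(2,3) by simp
    then show ?thesis using Y(1) unfolding has_cycle_def by blast
  next
    case False
    then have "\<And>Y. Y \<subset> X \<Longrightarrow> Y \<noteq> {} \<Longrightarrow> Delta ends Y < 0" by (meson not_le)
    then have "is_cycle ends X" using is_cycle_if_Delta_minimal[OF less(2,4)] less(3) by blast
    then show ?thesis unfolding has_cycle_def by blast
  qed
qed

lemma has_cycle_iff_Delta_nonneg:
  assumes "A \<subseteq> E" "connected_graph ends A"
  shows "has_cycle ends A \<longleftrightarrow> 0 \<le> Delta ends A"
proof
  assume "has_cycle ends A"
  then obtain Y where Y: "Y \<subseteq> A" "is_cycle ends Y" by (auto simp: has_cycle_def)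
  have "Y \<subseteq> E" using Y assms by blast
  then have "Delta ends Y = 0" "Y \<noteq> {}" using Delta_cycle Y is_cycle_nonempty by auto
  then show "0 \<le> Delta ends A" using Delta_le_connected[OF assms Y(1)] by simp
next
  assume "0 \<le> Delta ends A"
  moreover have "A \<noteq> {}" using assms(2) by (simp add: connected_graph_def)
  ultimately show "has_cycle ends A" using has_cycle_if_Delta_nonneg assms(1) by blast
qed

lemma incident_Diff: "v \<notin> verts ends Y \<Longrightarrow> incident (Z - Y) v = incident Z v"
  by (auto simp: incident_def verts_def)

text \<open>Adding a graph \<open>Z\<close> of minimum degree 2 to \<open>Y\<close> does not lower the excess, and every vertex
shared by \<open>Y\<close> and the new edges raises it by at least \<open>1/2\<close>: the new vertices have degree \<open>\<ge> 2\<close>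
in \<open>Z - Y\<close>, so by the handshake lemma they are at most as many as the new edges.\<close>

lemma Delta_Un_min_degree_2:
  assumes YE: "Y \<subseteq> E" and ZE: "Z \<subseteq> E" and deg: "\<forall>v\<in>verts ends Z. 2 \<le> degree ends Z v"
  shows "2 * Delta ends Y + int (card (verts ends (Z - Y) \<inter> verts ends Y)) \<le> 2 * Delta ends (Y \<union> Z)"
proof -
  let ?W = "Z - Y"
  let ?N = "verts ends ?W - verts ends Y" and ?S = "verts ends ?W \<inter> verts ends Y"
  have WE: "?W \<subseteq> E" using ZE by blast
  have degN: "2 \<le> degree ends ?W v" if v: "v \<in> ?N" for v
  proof -
    have "degree ends ?W v = degree ends Z v" using degree_cong[OF incident_Diff] v by blast
    moreover have "v \<in> verts ends Z" using v verts_mono[of ?W Z] by blast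
    ultimately show ?thesis using deg by simp
  qed
  have fN: "finite ?N" "finite ?S" using finite_verts[OF WE] by auto
  have "(\<Sum>v\<in>?N \<union> ?S. degree ends ?W v) = (\<Sum>v\<in>?N. degree ends ?W v) + (\<Sum>v\<in>?S. degree ends ?W v)"
    by (rule sum.union_disjoint[OF fN]) blast
  moreover have "?N \<union> ?S = verts ends ?W" by blast
  ultimately have "(\<Sum>v\<in>verts ends ?W. degree ends ?W v)
      = (\<Sum>v\<in>?N. degree ends ?W v) + (\<Sum>v\<in>?S. degree ends ?W v)" by simp
  moreover have "(\<Sum>v\<in>?N. 2) \<le> (\<Sum>v\<in>?N. degree ends ?W v)" using degN by (intro sum_mono) auto
  moreover have "(\<Sum>v\<in>?S. 1) \<le> (\<Sum>v\<in>?S. degree ends ?W v)"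
    using degree_ge_1[OF WE] by (intro sum_mono) auto
  ultimately have count: "2 * card ?N + card ?S \<le> 2 * card ?W" using sum_degree[OF WE] by simp
  have "card (Y \<union> ?W) = card Y + card ?W"
    using finite_edge_subset[OF YE] finite_edge_subset[OF WE] by (intro card_Un_disjoint) auto
  moreover have vu: "verts ends (Y \<union> ?W) = verts ends Y \<union> ?N" using verts_Un by blast
  have "card (verts ends (Y \<union> ?W)) = card (verts ends Y) + card ?N"
    unfolding vu using finite_verts[OF YE] fN(1) by (intro card_Un_disjoint) auto
  ultimately have "Delta ends (Y \<union> ?W) = Delta ends Y + int (card ?W) - int (card ?N)"
    by (simp add: Delta_def)
  then have "Delta ends (Y \<union> Z) = Delta ends Y + int (card ?W) - int (card ?N)" by simp
  then show ?thesis using count by linarith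
qed

lemma Delta_ge_1_if_two_cycles:
  assumes AE: "A \<subseteq> E" and conn: "connected_graph ends A"
    and Y1: "Y1 \<subseteq> A" "is_cycle ends Y1" and Y2: "Y2 \<subseteq> A" "is_cycle ends Y2" and ns: "\<not> Y2 \<subseteq> Y1"
  shows "1 \<le> Delta ends A"
proof -
  let ?W = "Y2 - Y1"
  have Y1E: "Y1 \<subseteq> E" and Y2E: "Y2 \<subseteq> E" using Y1 Y2 AE by auto
  have Y1ne: "Y1 \<noteq> {}" using is_cycle_nonempty[OF Y1(2)] .
  have D1: "Delta ends Y1 = 0" using Delta_cycle[OF Y1E Y1(2)] .
  have "\<forall>v\<in>verts ends Y2. 2 \<le> degree ends Y2 v" using Y2(2) by (simp add: is_cycle_def)
  then have grow: "int (card (verts ends ?W \<inter> verts ends Y1)) \<le> 2 * Delta ends (Y1 \<union> Y2)"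
    using Delta_Un_min_degree_2[OF Y1E Y2E] D1 by simp
  have U: "Y1 \<union> Y2 \<subseteq> A" using Y1 Y2 by blast
  show ?thesis
  proof (cases "verts ends ?W \<inter> verts ends Y1 = {}")
    case False
    moreover have "finite (verts ends ?W)" using finite_verts Y2E by blast
    ultimately have "1 \<le> card (verts ends ?W \<inter> verts ends Y1)"
      by (simp add: Suc_le_eq card_gt_0_iff)
    then have "1 \<le> Delta ends (Y1 \<union> Y2)" using grow by linarith
    moreover have "Delta ends (Y1 \<union> Y2) \<le> Delta ends A"
      using Delta_le_connected[OF AE conn U] Y1ne by blast
    ultimately show ?thesis by linarith
  next
    case True
    have Wne: "?W \<noteq> {}" using ns by blast
    have WU: "Y1 \<union> ?W \<subseteq> A" using U by blast
    have dj: "verts ends Y1 \<inter> verts ends ?W = {}" using True by blast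
    have "Delta ends (Y1 \<union> ?W) < Delta ends A"
      using Delta_verts_disjoint_less_connected[OF AE conn Y1ne Wne WU dj] .
    moreover have "Y1 \<union> ?W = Y1 \<union> Y2" by blast
    moreover have "0 \<le> Delta ends (Y1 \<union> Y2)" using grow by linarith
    ultimately show ?thesis by simp
  qed
qed

lemma has_two_cycles_iff_Delta_ge_1:
  assumes AE: "A \<subseteq> E" and conn: "connected_graph ends A"
  shows "has_two_cycles ends A \<longleftrightarrow> 1 \<le> Delta ends A"
proof
  assume "has_two_cycles ends A"
  then obtain Y1 Y2 where Y: "Y1 \<subseteq> A" "Y2 \<subseteq> A" "Y1 \<noteq> Y2" "is_cycle ends Y1" "is_cycle ends Y2"
    unfolding has_two_cycles_def by blast
  show "1 \<le> Delta ends A"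
  proof (cases "Y2 \<subseteq> Y1")
    case False
    then show ?thesis using Delta_ge_1_if_two_cycles[OF AE conn Y(1,4) Y(2,5)] by blast
  next
    case True
    then have "\<not> Y1 \<subseteq> Y2" using Y(3) by blast
    then show ?thesis using Delta_ge_1_if_two_cycles[OF AE conn Y(2,5) Y(1,4)] by blast
  qed
next
  assume D1: "1 \<le> Delta ends A"
  have Ane: "A \<noteq> {}" using conn by (simp add: connected_graph_def)
  obtain Y1 where Y1: "Y1 \<subseteq> A" "is_cycle ends Y1"
    using has_cycle_if_Delta_nonneg[OF AE Ane] D1 by (auto simp: has_cycle_def)
  then obtain e where e: "e \<in> Y1" using is_cycle_nonempty by blast
  have eA: "e \<in> A" and eE: "e \<in> E" using e Y1 AE by auto
  have ne: "A - {e} \<noteq> {}"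
  proof
    assume "A - {e} = {}"
    then have "A = {e}" using eA by blast
    then have "Delta ends A = 1 - int (card (ends e))" using Delta_single[OF eE] by simp
    moreover have "1 \<le> card (ends e)" using card_ends[OF eE] by auto
    ultimately show False using D1 by linarith
  qed
  have sub: "A - {e} \<subseteq> E" using AE by blast
  have "Delta ends A = Delta ends (A - {e}) + 1 - int (card (ends e - verts ends (A - {e})))"
    using Delta_insert[OF sub eE] eA by (simp add: insert_absorb)
  then have "0 \<le> Delta ends (A - {e})" using D1 by linarith
  then obtain Y2 where Y2: "Y2 \<subseteq> A - {e}" "is_cycle ends Y2"
    using has_cycle_if_Delta_nonneg[OF sub ne] by (auto simp: has_cycle_def)
  have "Y1 \<noteq> Y2" using e Y2(1) by blast
  then show "has_two_cycles ends A" unfolding has_two_cycles_def using Y1 Y2 by blast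
qed

section \<open>Kernels\<close>

text \<open>Submodularity, with monotonicity applied to \<open>K \<union> Y\<close>; the intersection cannot be empty
because \<open>\<Delta> {} = 0 < \<Delta> A\<close>.\<close>

lemma Delta_Int_eq_connected:
  assumes AE: "A \<subseteq> E" and conn: "connected_graph ends A" and D1: "1 \<le> Delta ends A"
    and K: "K \<subseteq> A" "K \<noteq> {}" "Delta ends K = Delta ends A"
    and Y: "Y \<subseteq> A" "Y \<noteq> {}" "Delta ends Y = Delta ends A"
  shows "K \<inter> Y \<noteq> {}" "Delta ends (K \<inter> Y) = Delta ends A"
proof -
  have "Delta ends K + Delta ends Y \<le> Delta ends (K \<union> Y) + Delta ends (K \<inter> Y)"
    using Delta_submodular K(1) Y(1) AE by blast
  moreover have "Delta ends (K \<union> Y) \<le> Delta ends A"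
    using Delta_le_connected[OF AE conn, of "K \<union> Y"] K Y by blast
  ultimately have ge: "Delta ends A \<le> Delta ends (K \<inter> Y)" using K(3) Y(3) by linarith
  then show ne: "K \<inter> Y \<noteq> {}" using D1 by auto
  have "Delta ends (K \<inter> Y) \<le> Delta ends A"
    using Delta_le_connected[OF AE conn, of "K \<inter> Y"] K(1) ne by blast
  then show "Delta ends (K \<inter> Y) = Delta ends A" using ge by linarith
qed

lemma kernel_is_least:
  assumes AE: "A \<subseteq> E" and conn: "connected_graph ends A" and D1: "1 \<le> Delta ends A"
  shows "kernel ends A \<subseteq> A" "kernel ends A \<noteq> {}" "Delta ends (kernel ends A) = Delta ends A"
    and "\<And>Y. Y \<subseteq> A \<Longrightarrow> Y \<noteq> {} \<Longrightarrow> Delta ends Y = Delta ends A \<Longrightarrow> kernel ends A \<subseteq> Y"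
proof -
  define P where "P Y \<longleftrightarrow> Y \<subseteq> A \<and> Y \<noteq> {} \<and> Delta ends Y = Delta ends A" for Y
  have "P A" using conn by (simp add: P_def connected_graph_def)
  then obtain K where K: "P K" and Kmin: "\<And>Y. P Y \<Longrightarrow> card K \<le> card Y"
    using ex_has_least_nat[of P A card] by blast
  have fK: "finite K" using finite_edge_subset K AE by (auto simp: P_def)
  have least: "K \<subseteq> Y" if "P Y" for Y
  proof -
    have "P (K \<inter> Y)"
      using Delta_Int_eq_connected[OF AE conn D1] K \<open>P Y\<close> unfolding P_def by blast
    then have "card K \<le> card (K \<inter> Y)" by (rule Kmin)
    moreover have "card (K \<inter> Y) \<le> card K" using fK by (intro card_mono) auto
    ultimately have "K \<inter> Y = K" using fK by (intro card_subset_eq) auto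
    then show ?thesis by blast
  qed
  have "kernel ends A = K"
    using K least by (intro kernel_eqI) (auto simp: P_def)
  then show "kernel ends A \<subseteq> A" "kernel ends A \<noteq> {}" "Delta ends (kernel ends A) = Delta ends A"
    and "\<And>Y. Y \<subseteq> A \<Longrightarrow> Y \<noteq> {} \<Longrightarrow> Delta ends Y = Delta ends A \<Longrightarrow> kernel ends A \<subseteq> Y"
    using K least by (auto simp: P_def)
qed

text \<open>Deleting the edge at a leaf loses one edge and one vertex, so it keeps \<open>\<Delta>\<close>; that contradicts
the minimality of the kernel.\<close>

lemma kernel_no_leaf:
  assumes AE: "A \<subseteq> E" and conn: "connected_graph ends A" and D1: "1 \<le> Delta ends A"
  shows "\<not> is_leaf ends (kernel ends A) v"
proof
  let ?K = "kernel ends A"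
  note kp = kernel_is_least[OF AE conn D1]
  assume "is_leaf ends ?K v"
  then obtain e where e: "e \<in> ?K" "v \<in> ends e" "\<not> is_loop ends e"
    "\<And>f. f \<in> ?K \<Longrightarrow> v \<in> ends f \<Longrightarrow> f = e"
    by (rule is_leafE) blast
  have KE: "?K \<subseteq> E" using kp(1) AE by blast
  have eE: "e \<in> E" using KE e by blast
  show False
  proof (cases "?K - {e} = {}")
    case True
    then have "?K = {e}" using e by blast
    then have "Delta ends ?K = 1 - int (card (ends e))" using Delta_single[OF eE] by simp
    moreover have "card (ends e) = 2" using card_ends[OF eE] e(3) by (auto simp: is_loop_def)
    ultimately show False using kp(3) D1 by simp
  next
    case False
    have sub: "?K - {e} \<subseteq> E" using KE by blast
    have "Delta ends ?K = Delta ends (?K - {e}) + 1 - int (card (ends e - verts ends (?K - {e})))"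
      using Delta_insert[OF sub eE] e(1) by (simp add: insert_absorb)
    moreover have "v \<in> ends e - verts ends (?K - {e})" using e(2,4) by (auto simp: verts_def)
    then have "1 \<le> card (ends e - verts ends (?K - {e}))" using finite_ends[OF eE]
      by (metis One_nat_def Suc_leI card_gt_0_iff empty_iff finite_Diff)
    ultimately have "Delta ends A \<le> Delta ends (?K - {e})" using kp(3) by linarith
    moreover have "Delta ends (?K - {e}) \<le> Delta ends A"
      using Delta_le_connected[OF AE conn, of "?K - {e}"] kp(1) False by blast
    ultimately have "?K \<subseteq> ?K - {e}" using kp(4)[of "?K - {e}"] kp(1) False by auto
    then show False using e(1) by blast
  qed
qed

lemma min_degree_2_subset:
  assumes AE: "A \<subseteq> E" and conn: "connected_graph ends A"
    and Y: "Y \<subseteq> A" "Y \<noteq> {}" "Delta ends Y = Delta ends A"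
    and Z: "Z \<subseteq> A" "\<forall>v\<in>verts ends Z. 2 \<le> degree ends Z v"
  shows "Z \<subseteq> Y"
proof (rule ccontr)
  assume nZ: "\<not> Z \<subseteq> Y"
  let ?W = "Z - Y"
  have YE: "Y \<subseteq> E" and ZE: "Z \<subseteq> E" using Y Z AE by auto
  note grow = Delta_Un_min_degree_2[OF YE ZE Z(2)]
  have U: "Y \<union> Z \<subseteq> A" using Y Z by blast
  have "Delta ends (Y \<union> Z) \<le> Delta ends A" using Delta_le_connected[OF AE conn U] Y(2) by blast
  then have "card (verts ends ?W \<inter> verts ends Y) = 0" using grow Y(3) by linarith
  moreover have "finite (verts ends ?W)" using finite_verts ZE by blast
  ultimately have "verts ends ?W \<inter> verts ends Y = {}" by simp
  then have dj: "verts ends Y \<inter> verts ends ?W = {}" by blast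
  have Wne: "?W \<noteq> {}" and WU: "Y \<union> ?W \<subseteq> A" using nZ U by blast+
  have eq: "Y \<union> ?W = Y \<union> Z" by blast
  have "Delta ends (Y \<union> ?W) < Delta ends A"
    using Delta_verts_disjoint_less_connected[OF AE conn Y(2) Wne WU dj] .
  then have "Delta ends (Y \<union> Z) < Delta ends A" unfolding eq .
  then show False using grow Y(3) by linarith
qed

lemma degree_eq_2_if_min_degree_2:
  assumes "X \<subseteq> E" "\<forall>v\<in>verts ends X. 2 \<le> degree ends X v" "Delta ends X \<le> 0"
  shows "\<forall>v\<in>verts ends X. degree ends X v = 2"
proof -
  have "(\<Sum>v\<in>verts ends X. 2) \<le> (\<Sum>v\<in>verts ends X. degree ends X v)"
    using assms(2) by (intro sum_mono) auto
  then have "card (verts ends X) \<le> card X" using sum_degree[OF assms(1)] by simp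
  then have "card X = card (verts ends X)" using assms(3) unfolding Delta_def by linarith
  then show ?thesis
    using sum_eq_const_if_ge[OF finite_verts[OF assms(1)]] assms(2) sum_degree[OF assms(1)] by simp
qed

section \<open>The core\<close>

lemma component_subset: "A \<in> components ends E \<Longrightarrow> A \<subseteq> E"
  using component_of_subset by (auto simp: components_eq_image)

lemma connected_component: "A \<in> components ends E \<Longrightarrow> connected_graph ends A"
  using connected_component_of ends_nonempty by (auto simp: components_eq_image)

lemma adj_closed_component: "A \<in> components ends E \<Longrightarrow> adj_closed A E"
  using adj_closed_component_of by (auto simp: components_eq_image)

lemma components_verts_disjoint:
  "A \<in> components ends E \<Longrightarrow> B \<in> components ends E \<Longrightarrow> A \<noteq> B
    \<Longrightarrow> verts ends A \<inter> verts ends B = {}"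
  using component_of_verts_disjoint by (auto simp: components_eq_image)

lemma finite_components: "finite (components ends E)"
  using finite_edges by (simp add: components_eq_image)

lemma component_of_in_components: "h \<in> E \<Longrightarrow> component_of E h \<in> components ends E"
  by (simp add: components_eq_image)

lemma adj_closed_Int_component:
  assumes "A \<in> components ends E" "X \<subseteq> E"
  shows "adj_closed (X \<inter> A) X"
  using adj_closed_component[OF assms(1)] assms(2) unfolding adj_closed_def by blast

lemma Delta_UN_components:
  assumes "\<C> \<subseteq> components ends E" "\<And>A. A \<in> \<C> \<Longrightarrow> X A \<subseteq> A"
  shows "Delta ends (\<Union>A\<in>\<C>. X A) = (\<Sum>A\<in>\<C>. Delta ends (X A))"
proof (rule Delta_UN_verts_disjoint)
  show "finite \<C>" using finite_components assms(1) finite_subset by blast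
  show "\<forall>A\<in>\<C>. X A \<subseteq> E" using assms component_subset by blast
  show "\<forall>A\<in>\<C>. \<forall>B\<in>\<C>. A \<noteq> B \<longrightarrow> verts ends (X A) \<inter> verts ends (X B) = {}"
  proof (intro ballI impI)
    fix A B assume "A \<in> \<C>" "B \<in> \<C>" "A \<noteq> B"
    then have "verts ends A \<inter> verts ends B = {}" using components_verts_disjoint assms(1) by blast
    moreover have "verts ends (X A) \<subseteq> verts ends A" "verts ends (X B) \<subseteq> verts ends B"
      using verts_mono assms(2) \<open>A \<in> \<C>\<close> \<open>B \<in> \<C>\<close> by auto
    ultimately show "verts ends (X A) \<inter> verts ends (X B) = {}" by blast
  qed
qed

definition positive_components :: "'e set set" where
  "positive_components = {A\<in>components ends E. 1 \<le> Delta ends A}"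

lemma core_eq_UN_kernel: "core ends E = (\<Union>A\<in>positive_components. kernel ends A)"
proof -
  have "{A\<in>components ends E. has_two_cycles ends A} = positive_components"
    using has_two_cycles_iff_Delta_ge_1 component_subset connected_component
    unfolding positive_components_def by blast
  then show ?thesis unfolding core_def by simp
qed

lemma kernel_positive_component:
  assumes "A \<in> positive_components"
  shows "kernel ends A \<subseteq> A" "Delta ends (kernel ends A) = Delta ends A"
    and "\<And>Y. Y \<subseteq> A \<Longrightarrow> Y \<noteq> {} \<Longrightarrow> Delta ends Y = Delta ends A \<Longrightarrow> kernel ends A \<subseteq> Y"
    and "\<not> is_leaf ends (kernel ends A) v"
  using assms kernel_is_least[OF component_subset connected_component]
    kernel_no_leaf[OF component_subset connected_component]
  unfolding positive_components_def by auto

lemma core_subset: "core ends E \<subseteq> E"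
  using kernel_positive_component(1) component_subset
  unfolding core_eq_UN_kernel positive_components_def by blast

lemma core_Int_component:
  assumes A: "A \<in> positive_components"
  shows "core ends E \<inter> A = kernel ends A"
proof
  show "kernel ends A \<subseteq> core ends E \<inter> A"
    using A kernel_positive_component(1)[OF A] unfolding core_eq_UN_kernel by blast
  show "core ends E \<inter> A \<subseteq> kernel ends A"
  proof
    fix e assume e: "e \<in> core ends E \<inter> A"
    then obtain B where B: "B \<in> positive_components" "e \<in> kernel ends B"
      unfolding core_eq_UN_kernel by blast
    have "A = B"
    proof (rule ccontr)
      assume "A \<noteq> B"
      then have "verts ends A \<inter> verts ends B = {}"
        using components_verts_disjoint A B(1) unfolding positive_components_def by blast
      moreover obtain v where "v \<in> ends e" using ends_nonempty e core_subset by blast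
      moreover have "e \<in> B" using B kernel_positive_component(1)[OF B(1)] by blast
      ultimately show False using e in_vertsI by blast
    qed
    then show "e \<in> kernel ends A" using B by simp
  qed
qed

lemma adj_closed_kernel_core:
  assumes "A \<in> positive_components"
  shows "adj_closed (kernel ends A) (core ends E)"
  using adj_closed_Int_component[OF _ core_subset, of A] core_Int_component[OF assms] assms
  unfolding positive_components_def by simp

lemma core_no_leaf:
  assumes "v \<in> verts ends (core ends E)"
  shows "\<not> is_leaf ends (core ends E) v"
proof -
  obtain e where e: "e \<in> core ends E" "v \<in> ends e" using assms by (auto simp: verts_def)
  then obtain A where A: "A \<in> positive_components" "e \<in> kernel ends A"
    unfolding core_eq_UN_kernel by blast
  have "v \<in> verts ends (kernel ends A)" using A(2) e(2) by (rule in_vertsI)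
  then have "incident (kernel ends A) v = incident (core ends E) v"
    using adj_closed_incident[OF adj_closed_kernel_core[OF A(1)]] by blast
  then show ?thesis using kernel_positive_component(4)[OF A(1)] is_leaf_cong by metis
qed

text \<open>A cycle component \<open>C\<close> of the core lies in a single kernel and has \<open>\<Delta> C = 0\<close>; since the rest of
that kernel is vertex-disjoint from \<open>C\<close>, it would be a smaller subgraph with the kernel's excess.\<close>

lemma core_no_cycle_component:
  assumes C: "C \<in> components ends (core ends E)"
  shows "\<not> is_cycle ends C"
proof
  assume cyc: "is_cycle ends C"
  obtain e where e: "e \<in> core ends E" "C = component_of (core ends E) e"
    using C components_eq_image by auto
  then obtain A where A: "A \<in> positive_components" "e \<in> kernel ends A"
    unfolding core_eq_UN_kernel by blast
  let ?K = "kernel ends A"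
  note kp = kernel_positive_component[OF A(1)]
  have CK: "C \<subseteq> ?K"
    using e(2) adj_closed_trancl[OF adj_closed_kernel_core[OF A(1)] _ A(2)]
    unfolding component_of_def by blast
  have eC: "e \<in> C" using component_of_self[OF e(1) ends_nonempty] e core_subset by blast
  have Ccl: "adj_closed C ?K"
    using adj_closed_component_of[of "core ends E" e] e(2) CK kp(1) core_Int_component[OF A(1)]
    unfolding adj_closed_def by blast
  have KE: "?K \<subseteq> E" using kp(1) A(1) component_subset unfolding positive_components_def by blast
  have DC: "Delta ends C = 0" using Delta_cycle[OF _ cyc] CK KE by blast
  have DA: "1 \<le> Delta ends A" using A(1) unfolding positive_components_def by blast
  then have "C \<noteq> ?K" using DC kp(2) by auto
  then have Dne: "?K - C \<noteq> {}" using CK by blast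
  have "Delta ends (C \<union> (?K - C)) = Delta ends C + Delta ends (?K - C)"
    using Delta_Un_verts_disjoint[OF _ _ adj_closed_verts_disjoint[OF Ccl]] CK KE by blast
  moreover have "C \<union> (?K - C) = ?K" using CK by blast
  ultimately have "Delta ends (?K - C) = Delta ends A" using DC kp(2) by simp
  then have "?K \<subseteq> ?K - C" using kp(3)[of "?K - C"] Dne kp(1) by blast
  then show False using eC A(2) by blast
qed

lemma cacti_core: "cacti ends (core ends E)"
  using core_no_leaf core_no_cycle_component by (simp add: cacti_def)

lemma min_degree_2_Int_component:
  assumes HE: "H \<subseteq> E" and cH: "cacti ends H" and A: "A \<in> components ends E"
  shows "\<forall>v\<in>verts ends (H \<inter> A). 2 \<le> degree ends (H \<inter> A) v"
proof
  fix v assume v: "v \<in> verts ends (H \<inter> A)"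
  have "v \<in> verts ends H" using v verts_mono[of "H \<inter> A" H] by blast
  then have "\<not> is_leaf ends H v" using cH by (simp add: cacti_def)
  moreover have "incident (H \<inter> A) v = incident H v"
    using adj_closed_incident[OF adj_closed_Int_component[OF A HE] v] .
  ultimately have "\<not> is_leaf ends (H \<inter> A) v" using is_leaf_cong by metis
  then show "2 \<le> degree ends (H \<inter> A) v" using degree_ge_2_if_not_leaf[OF _ v] HE by blast
qed

text \<open>In a component with \<open>\<Delta> \<le> 0\<close> the part of a cacti graph \<open>H\<close> would be 2-regular, so the
component of \<open>H\<close> through any of its edges would be a cycle.\<close>

lemma cacti_subset_core:
  assumes HE: "H \<subseteq> E" and cH: "cacti ends H"
  shows "H \<subseteq> core ends E"
proof
  fix h assume h: "h \<in> H"
  define A where "A = component_of E h"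
  have A: "A \<in> components ends E" "h \<in> A"
    using component_of_in_components component_of_self ends_nonempty h HE unfolding A_def by auto
  let ?HA = "H \<inter> A"
  have HAE: "?HA \<subseteq> E" using HE by blast
  have clHA: "adj_closed ?HA H" using adj_closed_Int_component[OF A(1) HE] .
  have deg: "\<forall>v\<in>verts ends ?HA. 2 \<le> degree ends ?HA v"
    using min_degree_2_Int_component[OF HE cH A(1)] .
  have hHA: "h \<in> ?HA" using h A by blast
  show "h \<in> core ends E"
  proof (cases "1 \<le> Delta ends A")
    case True
    then have pos: "A \<in> positive_components" using A(1) by (simp add: positive_components_def)
    have "?HA \<subseteq> kernel ends A"
      using min_degree_2_subset[OF component_subset[OF A(1)] connected_component[OF A(1)]
          kernel_is_least(1-3)[OF component_subset[OF A(1)] connected_component[OF A(1)] True]]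
        deg by blast
    then show ?thesis using hHA pos unfolding core_eq_UN_kernel by blast
  next
    case False
    have "Delta ends ?HA \<le> Delta ends A"
      using Delta_le_connected[OF component_subset[OF A(1)] connected_component[OF A(1)], of ?HA] hHA
      by blast
    then have deg2: "\<forall>v\<in>verts ends ?HA. degree ends ?HA v = 2"
      using degree_eq_2_if_min_degree_2[OF HAE deg] False by linarith
    let ?C = "component_of H h"
    have CHA: "?C \<subseteq> ?HA"
      using adj_closed_trancl[OF clHA _ hHA] unfolding component_of_def by blast
    have "is_cycle ends ?C" unfolding is_cycle_def
    proof (intro conjI ballI)
      show "connected_graph ends ?C" using connected_component_of ends_nonempty HE h by blast
      fix v assume v: "v \<in> verts ends ?C"
      have vHA: "v \<in> verts ends ?HA" using v verts_mono[OF CHA] by blast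
      have "incident ?C v = incident H v" using adj_closed_incident[OF adj_closed_component_of v] .
      also have "\<dots> = incident ?HA v" using adj_closed_incident[OF clHA vHA] by simp
      finally have "degree ends ?C v = degree ends ?HA v" by (rule degree_cong)
      then show "degree ends ?C v = 2" using deg2 vHA by simp
    qed
    moreover have "?C \<in> components ends H" using components_eq_image h by blast
    ultimately show ?thesis using cH by (simp add: cacti_def)
  qed
qed

lemma Delta_core: "Delta ends (core ends E) = (\<Sum>A\<in>positive_components. Delta ends A)"
proof -
  have "positive_components \<subseteq> components ends E" by (auto simp: positive_components_def)
  then have "Delta ends (core ends E) = (\<Sum>A\<in>positive_components. Delta ends (kernel ends A))"
    unfolding core_eq_UN_kernel using kernel_positive_component(1) by (rule Delta_UN_components)
  also have "\<dots> = (\<Sum>A\<in>positive_components. Delta ends A)"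
    using kernel_positive_component(2) by (intro sum.cong) auto
  finally show ?thesis .
qed

lemma Delta_remove_trees: "Delta ends (remove_trees ends E) = Delta ends (core ends E)"
proof -
  let ?C1 = "{A\<in>components ends E. 0 \<le> Delta ends A}"
  have "{A\<in>components ends E. has_cycle ends A} = ?C1"
    using has_cycle_iff_Delta_nonneg component_subset connected_component by blast
  then have "remove_trees ends E = (\<Union>A\<in>?C1. A)" unfolding remove_trees_def by simp
  then have "Delta ends (remove_trees ends E) = (\<Sum>A\<in>?C1. Delta ends A)"
    using Delta_UN_components[of ?C1 "\<lambda>A. A"] by simp
  also have "\<dots> = (\<Sum>A\<in>positive_components. Delta ends A)"
    using finite_components unfolding positive_components_def by (intro sum.mono_neutral_right) auto
  finally show ?thesis using Delta_core by simp
qed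

text \<open>\<open>\<Delta>\<close> of a subgraph of the core is the sum of its parts in the positive components, each at
most \<open>\<Delta>\<close> of its component, while \<open>\<Delta>\<close> of the core is the sum of those bounds. So equality forces
equality in every component, and then each part contains the kernel.\<close>

lemma cacti_eq_core_if_Delta:
  assumes HE: "H \<subseteq> E" and cH: "cacti ends H" and DH: "Delta ends H = Delta ends (core ends E)"
  shows "H = core ends E"
proof -
  let ?P = positive_components
  have HK: "H \<subseteq> core ends E" using cacti_subset_core[OF HE cH] .
  have "H = (\<Union>A\<in>?P. H \<inter> A)"
    using HK kernel_positive_component(1) unfolding core_eq_UN_kernel by blast
  then have sumH: "Delta ends H = (\<Sum>A\<in>?P. Delta ends (H \<inter> A))"
    using Delta_UN_components[of ?P "\<lambda>A. H \<inter> A"] unfolding positive_components_def by auto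
  have le: "\<forall>A\<in>?P. Delta ends (H \<inter> A) \<le> Delta ends A"
  proof
    fix A assume A: "A \<in> ?P"
    then have "A \<in> components ends E" "1 \<le> Delta ends A" by (simp_all add: positive_components_def)
    then show "Delta ends (H \<inter> A) \<le> Delta ends A"
      using Delta_le_connected[OF component_subset connected_component, of A "H \<inter> A"]
      by (cases "H \<inter> A = {}") auto
  qed
  have eq: "\<forall>A\<in>?P. Delta ends (H \<inter> A) = Delta ends A"
  proof (rule ccontr)
    assume "\<not> ?thesis"
    then have "\<exists>A\<in>?P. Delta ends (H \<inter> A) < Delta ends A" using le by force
    then have "(\<Sum>A\<in>?P. Delta ends (H \<inter> A)) < (\<Sum>A\<in>?P. Delta ends A)"
      using le finite_components unfolding positive_components_def by (intro sum_strict_mono_ex1) auto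
    then show False using sumH DH Delta_core by simp
  qed
  have "kernel ends A \<subseteq> H" if A: "A \<in> ?P" for A
  proof -
    have "H \<inter> A \<noteq> {}" using eq A by (force simp: positive_components_def)
    then show ?thesis using kernel_positive_component(3)[OF A, of "H \<inter> A"] eq A by blast
  qed
  then have "core ends E \<subseteq> H" unfolding core_eq_UN_kernel by blast
  then show ?thesis using HK by blast
qed

end

text \<open>The hypothesis that some component has two cycles only makes the core nonempty; the
equivalences hold without it.\<close>

theorem mainTheorem6:
  fixes ends :: "'e \<Rightarrow> 'v set" and E F :: "'e set"
  assumes "multigraph ends E"
    and "\<exists>A\<in>components ends E. has_two_cycles ends A"
    and "F \<subseteq> E"
  shows "(F = core ends E \<longleftrightarrow>
            (cacti ends F \<and> (\<forall>H. H \<subseteq> E \<and> cacti ends H \<longrightarrow> H \<subseteq> F)))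
       \<and> (F = core ends E \<longleftrightarrow>
            (cacti ends F \<and> Delta ends F = Delta ends (remove_trees ends E) \<and>
             (\<forall>H. H \<subseteq> E \<and> cacti ends H \<and> Delta ends H = Delta ends (remove_trees ends E)
                  \<longrightarrow> H = F)))"
proof -
  interpret finite_multigraph ends E using assms(1) by unfold_locales
  have maximum: "\<forall>H. H \<subseteq> E \<and> cacti ends H \<longrightarrow> H \<subseteq> core ends E"
    using cacti_subset_core by blast
  have unique: "\<forall>H. H \<subseteq> E \<and> cacti ends H \<and> Delta ends H = Delta ends (remove_trees ends E)
      \<longrightarrow> H = core ends E"
    using cacti_eq_core_if_Delta Delta_remove_trees by simp
  show ?thesis
  proof (intro conjI iffI)
    assume "cacti ends F \<and> (\<forall>H. H \<subseteq> E \<and> cacti ends H \<longrightarrow> H \<subseteq> F)"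
    then show "F = core ends E"
      using maximum cacti_core core_subset assms(3) by blast
  next
    assume "cacti ends F \<and> Delta ends F = Delta ends (remove_trees ends E) \<and>
      (\<forall>H. H \<subseteq> E \<and> cacti ends H \<and> Delta ends H = Delta ends (remove_trees ends E) \<longrightarrow> H = F)"
    then show "F = core ends E" using unique assms(3) by blast
  qed (use cacti_core maximum unique Delta_remove_trees in simp_all)
qed

end
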